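(* Let $\Omega\subset\mathbb{R}^N$ be a bounded open connected set, $F:\Omega\times\mathbb{R}\times\mathcal{S}(N)\to\mathbb{R}$ continuous with $\Gamma(x):=\{(r,A):F(x,r,A)=0\}\neq\emptyset$ for each $x\in\Omega$, and let $\Phi$ be a proper elliptic map on $\Omega$ such that $F(x,r+s,A+P)\ge F(x,r,A)$ for all $x\in\Omega$, $(r,A)\in\Phi(x)$, $(s,P)\in\mathcal{Q}$. Assume that $\Phi(x)\cap\Gamma(x)\neq\emptyset$ for each $x\in\Omega$ and that $\partial\Phi(x)\subset\{(r,A)\in\mathbb{R}\times\mathcal{S}(N):F(x,r,A)\le 0\}$ for each $x\in\Omega$. Then the map $\Theta(x):=\{(r,A)\in\Phi(x):F(x,r,A)\ge 0\}$ is a proper elliptic map and $\partial\Theta(x)\subset\Gamma(x)$ for every $x\in\Omega$ (i.e. $\Theta$ defines a proper elliptic branch of $F(x,u,D^2u)=0$).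
   Context: $\mathcal{S}(N)$: real symmetric $N\times N$ matrices with the usual partial order. $\mathcal{Q}:=\{(s,P)\in\mathbb{R}\times\mathcal{S}(N): s\le0,\ P\ge0\}$. A proper elliptic map $\Phi$ on $\Omega$ assigns to each $x\in\Omega$ a closed, nonempty set $\Phi(x)\subsetneq\mathbb{R}\times\mathcal{S}(N)$ with $\Phi(x)+\mathcal{Q}\subset\Phi(x)$. $\partial$ denotes topological boundary in $\mathbb{R}\times\mathcal{S}(N)$. *)

theory Defs
  imports "HOL-Analysis.Analysis"
begin

definition sym_mats :: "(real^'n^'n) set" where
  "sym_mats = {A. transpose A = A}"

definition psd :: "real^'n^'n \<Rightarrow> bool" where
  "psd P \<longleftrightarrow> P \<in> sym_mats \<and> (\<forall>v. 0 \<le> v \<bullet> (P *v v))"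

definition RS :: "(real \<times> (real^'n^'n)) set" where
  "RS = UNIV \<times> sym_mats"

definition Qcone :: "(real \<times> (real^'n^'n)) set" where
  "Qcone = {(s, P). s \<le> 0 \<and> psd P}"

definition bdry :: "(real \<times> (real^'n^'n)) set \<Rightarrow> (real \<times> (real^'n^'n)) set" where
  "bdry S = (top_of_set RS) frontier_of S"

definition proper_elliptic_map ::
  "(real^'n) set \<Rightarrow> (real^'n \<Rightarrow> (real \<times> (real^'n^'n)) set) \<Rightarrow> bool" where
  "proper_elliptic_map \<Omega> \<Phi> \<longleftrightarrow>
     (\<forall>x\<in>\<Omega>. \<Phi> x \<subseteq> RS \<and> closedin (top_of_set RS) (\<Phi> x) \<and> \<Phi> x \<noteq> {} \<and> \<Phi> x \<noteq> RS \<and>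
        (\<forall>r A s P. (r, A) \<in> \<Phi> x \<longrightarrow> (s, P) \<in> Qcone \<longrightarrow> (r + s, A + P) \<in> \<Phi> x))"

end

theory Submission
  imports Defs
begin

text \<open>
  \<Theta>(x) is the intersection of the closed set \<Phi>(x) with the closed superlevel set {F(x,-) \<ge> 0},
  so it is closed, nonempty because \<Phi>(x) meets \<Gamma>(x), proper because it lies in \<Phi>(x), and
  invariant under adding Q because both \<Phi>(x) and the sign of F(x,-) on \<Phi>(x) are.
  A boundary point z of \<Theta>(x) lies in \<Theta>(x), so F(x,z) \<ge> 0. If F(x,z) > 0, then z cannot lie
  on the boundary of \<Phi>(x), where F(x,-) \<le> 0; hence z is interior to \<Phi>(x), and the open set
  int \<Phi>(x) \<inter> {F(x,-) > 0} is a neighbourhood of z inside \<Theta>(x), contradicting z \<in> \<partial>\<Theta>(x).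
\<close>

lemma frontier_of_superlevel_subset:
  fixes g :: "'a \<Rightarrow> real"
  assumes S: "closedin X S" and g: "continuous_map X euclideanreal g"
    and frontier_nonpos: "\<And>z. z \<in> X frontier_of S \<Longrightarrow> g z \<le> 0"
  shows "X frontier_of {z \<in> S. 0 \<le> g z} \<subseteq> {z \<in> S. g z = 0}"
proof
  let ?T = "{z \<in> S. 0 \<le> g z}"
  fix z assume z: "z \<in> X frontier_of ?T"
  have "closedin X ?T"
    using closedin_continuous_map_preimage_gen[OF g S, of "{0..}"] by simp
  then have zT: "z \<in> ?T"
    using z frontier_of_subset_closedin by blast
  have "\<not> 0 < g z"
  proof
    assume pos: "0 < g z"
    then have "z \<notin> X frontier_of S"
      using frontier_nonpos by force
    moreover have "z \<in> X closure_of S"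
      using zT S closure_of_closedin by fastforce
    ultimately have "z \<in> X interior_of S"
      by (simp add: frontier_of_def)
    define U where "U = {y \<in> X interior_of S. 0 < g y}"
    have "openin X U"
      unfolding U_def
      using openin_continuous_map_preimage_gen[OF g openin_interior_of, where V = "{0<..}"] by simp
    moreover have "U \<subseteq> ?T"
      unfolding U_def using interior_of_subset by fastforce
    ultimately have "U \<subseteq> X interior_of ?T"
      by (rule interior_of_maximal[rotated])
    moreover have "z \<in> U"
      unfolding U_def using \<open>z \<in> X interior_of S\<close> pos by simp
    ultimately show False
      using z by (auto simp: frontier_of_def)
  qed
  then show "z \<in> {z \<in> S. g z = 0}"
    using zT by simp
qed

lemma proper_elliptic_map_superlevel:
  fixes \<Phi> :: "real^'n \<Rightarrow> (real \<times> (real^'n^'n)) set"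
    and g :: "real^'n \<Rightarrow> real \<times> (real^'n^'n) \<Rightarrow> real"
  assumes \<Phi>: "proper_elliptic_map \<Omega> \<Phi>"
    and g_cont: "\<And>x. x \<in> \<Omega> \<Longrightarrow> continuous_on RS (g x)"
    and g_mono: "\<And>x r A s P. x \<in> \<Omega> \<Longrightarrow> (r, A) \<in> \<Phi> x \<Longrightarrow> (s, P) \<in> Qcone \<Longrightarrow>
      g x (r, A) \<le> g x (r + s, A + P)"
    and nonneg_point: "\<And>x. x \<in> \<Omega> \<Longrightarrow> \<exists>z \<in> \<Phi> x. 0 \<le> g x z"
  shows "proper_elliptic_map \<Omega> (\<lambda>x. {z \<in> \<Phi> x. 0 \<le> g x z})"
  unfolding proper_elliptic_map_def
proof (intro ballI conjI allI impI)
  fix x assume x: "x \<in> \<Omega>"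
  have \<Phi>x: "\<Phi> x \<subseteq> RS" "closedin (top_of_set RS) (\<Phi> x)" "\<Phi> x \<noteq> RS"
    "\<And>r A s P. (r, A) \<in> \<Phi> x \<Longrightarrow> (s, P) \<in> Qcone \<Longrightarrow> (r + s, A + P) \<in> \<Phi> x"
    using \<Phi> x unfolding proper_elliptic_map_def by blast+
  show "{z \<in> \<Phi> x. 0 \<le> g x z} \<subseteq> RS" "{z \<in> \<Phi> x. 0 \<le> g x z} \<noteq> RS"
    using \<Phi>x(1,3) by auto
  show "closedin (top_of_set RS) {z \<in> \<Phi> x. 0 \<le> g x z}"
    using closedin_continuous_map_preimage_gen[OF _ \<Phi>x(2), where Y = euclideanreal and f = "g x" and V = "{0..}"] g_cont[OF x] by simp
  show "{z \<in> \<Phi> x. 0 \<le> g x z} \<noteq> {}"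
    using nonneg_point[OF x] by blast
  fix r s :: real and A P :: "real^'n^'n"
  assume "(r, A) \<in> {z \<in> \<Phi> x. 0 \<le> g x z}" "(s, P) \<in> Qcone"
  then show "(r + s, A + P) \<in> {z \<in> \<Phi> x. 0 \<le> g x z}"
    using \<Phi>x(4) g_mono[OF x] by fastforce
qed

theorem theorem6p3:
  fixes \<Omega> :: "(real^'n) set"
    and F :: "real^'n \<Rightarrow> real \<Rightarrow> real^'n^'n \<Rightarrow> real"
    and \<Phi> :: "real^'n \<Rightarrow> (real \<times> (real^'n^'n)) set"
  assumes "bounded \<Omega>" and "open \<Omega>" and "connected \<Omega>"
    and "continuous_on (\<Omega> \<times> RS) (\<lambda>(x, r, A). F x r A)"
    and "\<forall>x\<in>\<Omega>. {(r, A). A \<in> sym_mats \<and> F x r A = 0} \<noteq> {}"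
    and "proper_elliptic_map \<Omega> \<Phi>"
    and "\<forall>x\<in>\<Omega>. \<forall>r A s P. (r, A) \<in> \<Phi> x \<longrightarrow> (s, P) \<in> Qcone \<longrightarrow>
            F x (r + s) (A + P) \<ge> F x r A"
    and "\<forall>x\<in>\<Omega>. \<Phi> x \<inter> {(r, A). A \<in> sym_mats \<and> F x r A = 0} \<noteq> {}"
    and "\<forall>x\<in>\<Omega>. bdry (\<Phi> x) \<subseteq> {(r, A). A \<in> sym_mats \<and> F x r A \<le> 0}"
  shows "proper_elliptic_map \<Omega> (\<lambda>x. {(r, A). (r, A) \<in> \<Phi> x \<and> F x r A \<ge> 0})
    \<and> (\<forall>x\<in>\<Omega>. bdry {(r, A). (r, A) \<in> \<Phi> x \<and> F x r A \<ge> 0}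
                 \<subseteq> {(r, A). A \<in> sym_mats \<and> F x r A = 0})"
proof -
  define g where "g x = (\<lambda>(r, A). F x r A)" for x
  have \<Theta>_eq: "{(r, A). (r, A) \<in> \<Phi> x \<and> F x r A \<ge> 0} = {z \<in> \<Phi> x. 0 \<le> g x z}" for x
    by (auto simp: g_def)
  have g_cont: "continuous_on RS (g x)" if "x \<in> \<Omega>" for x
    using continuous_on_compose_Pair[OF assms(4) continuous_on_const continuous_on_id] that
    by (simp add: g_def)
  have \<Phi>_closed: "closedin (top_of_set RS) (\<Phi> x)" and \<Phi>_RS: "\<Phi> x \<subseteq> RS" if "x \<in> \<Omega>" for x
    using assms(6) that unfolding proper_elliptic_map_def by blast+
  have "proper_elliptic_map \<Omega> (\<lambda>x. {z \<in> \<Phi> x. 0 \<le> g x z})"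
    by (rule proper_elliptic_map_superlevel[OF assms(6) g_cont])
      (use assms(7,8) in \<open>fastforce simp: g_def\<close>)+
  moreover have "bdry {z \<in> \<Phi> x. 0 \<le> g x z} \<subseteq> {(r, A). A \<in> sym_mats \<and> F x r A = 0}"
    if x: "x \<in> \<Omega>" for x
  proof -
    have "bdry {z \<in> \<Phi> x. 0 \<le> g x z} \<subseteq> {z \<in> \<Phi> x. g x z = 0}"
      unfolding bdry_def using g_cont[OF x]
      by (intro frontier_of_superlevel_subset[OF \<Phi>_closed[OF x]])
        (use assms(9) x in \<open>auto simp: bdry_def g_def\<close>)
    then show ?thesis
      using \<Phi>_RS[OF x] by (force simp: g_def RS_def)
  qed
  ultimately show ?thesis
    unfolding \<Theta>_eq by blast
qed

end
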